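(* Let $a,b>0$ with $a+b=1/2$. Then $$\mathbf{B}'_{a,b}+\mathbf{B}'_{a,b}\;\stackrel{d}{=}\;\mathbf{B}'_{2a,2b}\times\left(\mathbf{B}_{a,1/2}+\mathbf{B}_{b,1/2}^{-1}\right),$$ where all random variables appearing on the same side of the identity are independent.
   Context: For $p,q>0$, $\mathbf{B}_{p,q}$ denotes a beta random variable with density $\frac{\Gamma(p+q)}{\Gamma(p)\Gamma(q)}x^{p-1}(1-x)^{q-1}$ on $(0,1)$, and $\mathbf{B}'_{p,q}$ a beta prime random variable with density $\frac{\Gamma(p+q)}{\Gamma(p)\Gamma(q)}\frac{x^{p-1}}{(1+x)^{p+q}}$ on $(0,\infty)$. $\stackrel{d}{=}$ denotes equality in distribution. *)

theory Defs
  imports "HOL-Probability.Probability"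
begin

definition beta_density :: "real \<Rightarrow> real \<Rightarrow> real \<Rightarrow> real" where
  "beta_density p q x =
     (if 0 < x \<and> x < 1
      then Gamma (p + q) / (Gamma p * Gamma q) * x powr (p - 1) * (1 - x) powr (q - 1)
      else 0)"

definition beta_prime_density :: "real \<Rightarrow> real \<Rightarrow> real \<Rightarrow> real" where
  "beta_prime_density p q x =
     (if 0 < x
      then Gamma (p + q) / (Gamma p * Gamma q) * x powr (p - 1) / (1 + x) powr (p + q)
      else 0)"

definition beta_measure :: "real \<Rightarrow> real \<Rightarrow> real measure" where
  "beta_measure p q = density lborel (\<lambda>x. ennreal (beta_density p q x))"

definition beta_prime_measure :: "real \<Rightarrow> real \<Rightarrow> real measure" where
  "beta_prime_measure p q = density lborel (\<lambda>x. ennreal (beta_prime_density p q x))"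

end

theory Submission
  imports Defs
begin

text \<open>Write \<open>U = X Y\<close> and \<open>V = X / Z\<close>, so that the right-hand side is the law of \<open>U + V\<close>.
  Substituting \<open>x = z v\<close>, \<open>y = u / (z v)\<close> and integrating out \<open>z\<close>, which is an arcsine integral, shows
  that \<open>(U, V)\<close> has density \<open>2 f(u) f(v)\<close> on \<open>0 < u < v\<close>, where \<open>f\<close> is the \<open>B'(a,b)\<close> density; the
  constants match by Legendre's duplication formula, which is where \<open>a + b = 1/2\<close> enters. This is the
  joint density of the minimum and maximum of two independent \<open>B'(a,b)\<close> variables, whose sum is the
  left-hand side.\<close>

lemma Gamma_legendre_duplication_real:
  fixes x :: real
  assumes "x > 0"
  shows "Gamma x * Gamma (x + 1/2) = 2 powr (1 - 2 * x) * sqrt pi * Gamma (2 * x)"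
proof -
  have nonpos: "complex_of_real x \<notin> \<int>\<^sub>\<le>\<^sub>0" "complex_of_real x + 1/2 \<notin> \<int>\<^sub>\<le>\<^sub>0"
    using assms by (auto elim!: nonpos_Ints_cases simp: complex_eq_iff)
  have "complex_of_real (Gamma x * Gamma (x + 1/2))
      = Gamma (complex_of_real x) * Gamma (complex_of_real x + 1/2)"
    by (simp flip: Gamma_complex_of_real)
  also have "\<dots> = exp ((1 - 2 * complex_of_real x) * of_real (ln 2)) * of_real (sqrt pi)
                    * Gamma (2 * complex_of_real x)"
    by (rule Gamma_legendre_duplication[OF nonpos])
  also have "\<dots> = complex_of_real (exp ((1 - 2 * x) * ln 2) * sqrt pi * Gamma (2 * x))"
    by (simp flip: Gamma_complex_of_real exp_of_real)
  finally show ?thesis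
    by (simp only: of_real_eq_iff powr_def) simp
qed

lemma Gamma_duplication_product:
  fixes a b :: real
  assumes "a > 0" "b > 0" "a + b = 1/2"
  shows "Gamma a * Gamma (a + 1/2) * (Gamma b * Gamma (b + 1/2)) = 2 * pi * Gamma (2 * a) * Gamma (2 * b)"
proof -
  have "2 powr (1 - 2 * a) * 2 powr (1 - 2 * b) = (2 :: real)"
    using assms(3) by (simp flip: powr_add) (simp add: algebra_simps)
  then show ?thesis
    using assms by (simp add: Gamma_legendre_duplication_real algebra_simps)
qed

text \<open>A Moebius map in \<open>z\<close> sending \<open>\<alpha>\<close> to \<open>-1\<close> and \<open>1\<close> to \<open>1\<close>; as a new variable \<open>t\<close> it turns the
  integrand of \<open>has_integral_arcsin_substitution\<close> into a multiple of \<open>1 / sqrt (1 - t\<^sup>2)\<close>.\<close>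
definition arcsin_substitution :: "real \<Rightarrow> real \<Rightarrow> real \<Rightarrow> real" where
  "arcsin_substitution \<alpha> c z = 1 - 2 * (1 + c * \<alpha>) * (1 - z) / ((1 - \<alpha>) * (1 + c * z))"

lemma arcsin_substitution_factors:
  fixes \<alpha> c z :: real
  assumes "\<alpha> < 1" "0 < 1 + c * \<alpha>" "0 < 1 + c" and z: "\<alpha> \<le> z" "z \<le> 1"
  shows "0 < 1 + c * z"
    and "1 - arcsin_substitution \<alpha> c z = 2 * (1 + c * \<alpha>) * (1 - z) / ((1 - \<alpha>) * (1 + c * z))"
    and "1 + arcsin_substitution \<alpha> c z = 2 * (1 + c) * (z - \<alpha>) / ((1 - \<alpha>) * (1 + c * z))"
proof -
  \<comment> \<open>\<open>1 + c z\<close> interpolates linearly between its positive values at \<open>\<alpha>\<close> and at \<open>1\<close>\<close>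
  have interpolation: "(1 - \<alpha>) * (1 + c * z) = (1 - z) * (1 + c * \<alpha>) + (z - \<alpha>) * (1 + c)"
    by (simp add: algebra_simps)
  moreover have "(1 - z) * (1 + c * \<alpha>) + (z - \<alpha>) * (1 + c) > 0"
    using assms by (cases "z < 1") (auto intro: add_pos_nonneg add_nonneg_pos)
  ultimately show pos: "0 < 1 + c * z"
    using assms(1) by (metis diff_gt_0_iff_gt zero_less_mult_pos)
  show "1 - arcsin_substitution \<alpha> c z = 2 * (1 + c * \<alpha>) * (1 - z) / ((1 - \<alpha>) * (1 + c * z))"
    by (simp add: arcsin_substitution_def)
  have "(1 - \<alpha>) * (1 + c * z) \<noteq> 0"
    using pos assms(1) by simp
  then show "1 + arcsin_substitution \<alpha> c z = 2 * (1 + c) * (z - \<alpha>) / ((1 - \<alpha>) * (1 + c * z))"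
    using interpolation by (simp add: arcsin_substitution_def field_simps)
qed

lemma arcsin_substitution_bounds:
  fixes \<alpha> c z :: real
  assumes "\<alpha> < 1" "0 < 1 + c * \<alpha>" "0 < 1 + c" and z: "\<alpha> \<le> z" "z \<le> 1"
  shows "\<bar>arcsin_substitution \<alpha> c z\<bar> \<le> 1"
    and "\<alpha> < z \<Longrightarrow> z < 1 \<Longrightarrow> \<bar>arcsin_substitution \<alpha> c z\<bar> < 1"
proof -
  note factors = arcsin_substitution_factors[OF assms]
  have "0 \<le> 1 - arcsin_substitution \<alpha> c z" "0 \<le> 1 + arcsin_substitution \<alpha> c z"
    unfolding factors(2,3) using assms factors(1) by simp_all
  then show "\<bar>arcsin_substitution \<alpha> c z\<bar> \<le> 1" by linarith
  assume "\<alpha> < z" "z < 1"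
  then have "0 < 1 - arcsin_substitution \<alpha> c z" "0 < 1 + arcsin_substitution \<alpha> c z"
    unfolding factors(2,3) using assms factors(1) by simp_all
  then show "\<bar>arcsin_substitution \<alpha> c z\<bar> < 1" by linarith
qed

lemma has_real_derivative_arcsin_substitution:
  fixes \<alpha> c z :: real
  assumes "\<alpha> < 1" "0 < 1 + c * \<alpha>" "0 < 1 + c" and z: "\<alpha> < z" "z < 1"
  shows "((\<lambda>z. arcsin (arcsin_substitution \<alpha> c z)) has_real_derivative
           sqrt ((1 + c * \<alpha>) * (1 + c)) / ((1 + c * z) * sqrt ((1 - z) * (z - \<alpha>)))) (at z)"
proof -
  define A B g where "A = 1 + c * \<alpha>" and "B = 1 + c" and "g = arcsin_substitution \<alpha> c"
  define S Q where "S = sqrt (A * B)" and "Q = sqrt ((1 - z) * (z - \<alpha>))"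
  have z_le: "\<alpha> \<le> z" "z \<le> 1"
    using z by auto
  note factors = arcsin_substitution_factors[OF assms(1-3) z_le, folded A_def B_def g_def]
  have \<alpha>: "1 - \<alpha> > 0" and w: "1 + c * z > 0"
    using assms factors(1) by auto
  have S: "S > 0" "S * S = A * B" and Q: "Q > 0" "Q * Q = (1 - z) * (z - \<alpha>)"
    using assms z by (auto simp: S_def Q_def A_def B_def)
  have "(g has_real_derivative 2 * A * B / ((1 - \<alpha>) * (1 + c * z)\<^sup>2)) (at z)"
    unfolding g_def arcsin_substitution_def
    apply (rule derivative_eq_intros refl | use w \<alpha> in force)+
    using w \<alpha> by (simp add: A_def B_def divide_simps power2_eq_square) (simp add: algebra_simps)
  then have "((\<lambda>z. arcsin (g z)) has_real_derivative
               inverse (sqrt (1 - (g z)\<^sup>2)) * (2 * A * B / ((1 - \<alpha>) * (1 + c * z)\<^sup>2))) (at z)"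
    using arcsin_substitution_bounds(2)[OF assms(1-3) z_le z]
    by (intro DERIV_chain2[OF DERIV_arcsin]) (auto simp: g_def)
  moreover have "sqrt (1 - (g z)\<^sup>2) = 2 * S * Q / ((1 - \<alpha>) * (1 + c * z))"
  proof -
    have "1 - (g z)\<^sup>2 = (1 - g z) * (1 + g z)"
      by (simp add: power2_eq_square algebra_simps)
    also have "\<dots> = 4 * (S * S) * (Q * Q) / ((1 - \<alpha>) * (1 + c * z))\<^sup>2"
      unfolding factors(2,3) S(2) Q(2) by (simp add: power2_eq_square times_divide_times_eq algebra_simps)
    also have "\<dots> = (2 * S * Q / ((1 - \<alpha>) * (1 + c * z)))\<^sup>2"
      by (simp add: power2_eq_square algebra_simps)
    finally show ?thesis
      using S(1) Q(1) w \<alpha> by simp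
  qed
  moreover have "inverse (2 * S * Q / ((1 - \<alpha>) * (1 + c * z))) * (2 * (S * S) / ((1 - \<alpha>) * (1 + c * z)\<^sup>2))
               = S / ((1 + c * z) * Q)"
    using S(1) Q(1) w \<alpha> by (simp add: divide_simps power2_eq_square)
  ultimately have "((\<lambda>z. arcsin (g z)) has_real_derivative S / ((1 + c * z) * Q)) (at z)"
    by (simp only: mult.assoc[of 2 A B] S(2)[symmetric])
  then show ?thesis
    by (simp only: g_def S_def Q_def A_def B_def)
qed

lemma has_integral_arcsin_substitution:
  fixes \<alpha> c :: real
  assumes "\<alpha> < 1" "0 < 1 + c * \<alpha>" "0 < 1 + c"
  shows "((\<lambda>z. 1 / ((1 + c * z) * sqrt ((1 - z) * (z - \<alpha>))))
           has_integral pi / sqrt ((1 + c * \<alpha>) * (1 + c))) {\<alpha>..1}"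
proof -
  define S where "S = sqrt ((1 + c * \<alpha>) * (1 + c))"
  have S: "S > 0"
    using assms by (simp add: S_def)
  define F where "F z = arcsin (arcsin_substitution \<alpha> c z) / S" for z
  have "continuous_on {\<alpha>..1} (arcsin_substitution \<alpha> c)"
    unfolding arcsin_substitution_def using assms arcsin_substitution_factors(1)[OF assms]
    by (intro continuous_intros) fastforce+
  then have "continuous_on {\<alpha>..1} F"
    unfolding F_def using arcsin_substitution_bounds(1)[OF assms] S
    by (intro continuous_intros continuous_on_arcsin) (auto simp: abs_le_iff)
  moreover have "(F has_vector_derivative 1 / ((1 + c * z) * sqrt ((1 - z) * (z - \<alpha>)))) (at z)"
    if "z \<in> {\<alpha><..<1}" for z
  proof -
    have "(F has_real_derivative S / ((1 + c * z) * sqrt ((1 - z) * (z - \<alpha>))) / S) (at z)"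
      unfolding F_def S_def using that by (intro DERIV_cdivide has_real_derivative_arcsin_substitution assms) auto
    then show ?thesis
      using S by (simp add: has_real_derivative_iff_has_vector_derivative)
  qed
  moreover have "arcsin_substitution \<alpha> c 1 = 1" "arcsin_substitution \<alpha> c \<alpha> = -1"
    using arcsin_substitution_factors(2)[OF assms, of 1] arcsin_substitution_factors(3)[OF assms, of \<alpha>] assms(1)
    by simp_all
  then have "F 1 - F \<alpha> = pi / S"
    by (simp add: F_def diff_divide_distrib)
  ultimately show ?thesis
    using fundamental_theorem_of_calculus_interior[of \<alpha> 1 F] assms(1) by (simp add: S_def)
qed

lemma nn_integral_lborel_rotate:
  fixes f :: "real \<Rightarrow> real \<Rightarrow> real \<Rightarrow> ennreal"
  assumes [measurable]: "(\<lambda>(x, y, z). f x y z) \<in> borel_measurable (borel \<Otimes>\<^sub>M borel \<Otimes>\<^sub>M borel)"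
  shows "(\<integral>\<^sup>+x. \<integral>\<^sup>+y. \<integral>\<^sup>+z. f x y z \<partial>lborel \<partial>lborel \<partial>lborel)
       = (\<integral>\<^sup>+z. \<integral>\<^sup>+x. \<integral>\<^sup>+y. f x y z \<partial>lborel \<partial>lborel \<partial>lborel)"
proof -
  have "(\<lambda>\<omega>. (fst (fst \<omega>), snd \<omega>, snd (fst \<omega>))) \<in> measurable ((borel \<Otimes>\<^sub>M borel) \<Otimes>\<^sub>M borel) (borel \<Otimes>\<^sub>M borel \<Otimes>\<^sub>M borel)"
    by measurable
  from measurable_compose[OF this assms]
  have [measurable]: "(\<lambda>\<omega>. f (fst (fst \<omega>)) (snd \<omega>) (snd (fst \<omega>))) \<in> borel_measurable ((borel \<Otimes>\<^sub>M borel) \<Otimes>\<^sub>M borel)"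
    by (simp add: case_prod_beta')
  have "(\<integral>\<^sup>+x. \<integral>\<^sup>+y. \<integral>\<^sup>+z. f x y z \<partial>lborel \<partial>lborel \<partial>lborel)
      = (\<integral>\<^sup>+x. \<integral>\<^sup>+z. \<integral>\<^sup>+y. f x y z \<partial>lborel \<partial>lborel \<partial>lborel)"
    by (intro nn_integral_cong lborel_pair.Fubini'[symmetric]) measurable
  also have "\<dots> = (\<integral>\<^sup>+z. \<integral>\<^sup>+x. \<integral>\<^sup>+y. f x y z \<partial>lborel \<partial>lborel \<partial>lborel)"
    by (rule lborel_pair.Fubini'[symmetric]) measurable
  finally show ?thesis .
qed

lemma nn_integral_lborel_symmetric:
  fixes f :: "real \<Rightarrow> real \<Rightarrow> ennreal"
  assumes [measurable]: "(\<lambda>(x, y). f x y) \<in> borel_measurable (borel \<Otimes>\<^sub>M borel)"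
    and sym: "\<And>x y. f x y = f y x"
  shows "(\<integral>\<^sup>+x. \<integral>\<^sup>+y. f x y \<partial>lborel \<partial>lborel)
       = (\<integral>\<^sup>+x. \<integral>\<^sup>+y. (if x < y then 2 * f x y else 0) \<partial>lborel \<partial>lborel)"
proof -
  define g where "g x y = (if x < y then f x y else 0)" for x y
  have [measurable]: "(\<lambda>(x, y). g x y) \<in> borel_measurable (borel \<Otimes>\<^sub>M borel)"
    unfolding g_def by measurable
  have "(\<integral>\<^sup>+y. f x y \<partial>lborel) = (\<integral>\<^sup>+y. g x y + g y x \<partial>lborel)" for x
    \<comment> \<open>the two sides differ only on the null diagonal \<open>y = x\<close>\<close>
    using AE_lborel_singleton[of x] by (intro nn_integral_cong_AE) (auto simp: g_def sym)
  then have "(\<integral>\<^sup>+x. \<integral>\<^sup>+y. f x y \<partial>lborel \<partial>lborel)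
      = (\<integral>\<^sup>+x. \<integral>\<^sup>+y. g x y \<partial>lborel \<partial>lborel) + (\<integral>\<^sup>+x. \<integral>\<^sup>+y. g y x \<partial>lborel \<partial>lborel)"
    by (simp add: nn_integral_add)
  also have "(\<integral>\<^sup>+x. \<integral>\<^sup>+y. g y x \<partial>lborel \<partial>lborel) = (\<integral>\<^sup>+x. \<integral>\<^sup>+y. g x y \<partial>lborel \<partial>lborel)"
    by (rule lborel_pair.Fubini') measurable
  also have "(\<integral>\<^sup>+x. \<integral>\<^sup>+y. g x y \<partial>lborel \<partial>lborel) + (\<integral>\<^sup>+x. \<integral>\<^sup>+y. g x y \<partial>lborel \<partial>lborel)
      = 2 * (\<integral>\<^sup>+x. \<integral>\<^sup>+y. g x y \<partial>lborel \<partial>lborel)"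
    by (simp add: mult_2)
  also have "\<dots> = (\<integral>\<^sup>+x. 2 * (\<integral>\<^sup>+y. g x y \<partial>lborel) \<partial>lborel)"
    by (rule nn_integral_cmult[symmetric]) measurable
  also have "\<dots> = (\<integral>\<^sup>+x. \<integral>\<^sup>+y. 2 * g x y \<partial>lborel \<partial>lborel)"
    by (intro nn_integral_cong nn_integral_cmult[symmetric]) measurable
  finally show ?thesis
    by (simp add: g_def if_distrib[where f = "(*) (2 :: ennreal)"] cong: if_cong)
qed

lemma nn_integral_lborel_scale:
  fixes f :: "real \<Rightarrow> real" and c :: real
  assumes [measurable]: "f \<in> borel_measurable borel" and c: "c > 0"
  shows "(\<integral>\<^sup>+x. ennreal (f x) \<partial>lborel) = (\<integral>\<^sup>+t. ennreal (c * f (c * t)) \<partial>lborel)"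
  using nn_integral_real_affine[of "\<lambda>x. ennreal (f x)" c 0] c
  by (simp add: ennreal_mult' nn_integral_cmult)

lemma sigma_finite_density_lborel:
  fixes f :: "real \<Rightarrow> real"
  assumes "f \<in> borel_measurable borel"
  shows "sigma_finite_measure (density lborel (\<lambda>x. ennreal (f x)))"
  using assms by (subst sigma_finite_measure.sigma_finite_iff_density_finite[OF sigma_finite_lborel]) auto

lemma nn_integral_density_lborel_pair:
  fixes f :: "real \<Rightarrow> ennreal"
  assumes [measurable]: "f \<in> borel_measurable borel" and "sigma_finite_measure M"
    and [measurable]: "h \<in> borel_measurable (borel \<Otimes>\<^sub>M M)"
  shows "(\<integral>\<^sup>+\<omega>. h \<omega> \<partial>(density lborel f \<Otimes>\<^sub>M M)) = (\<integral>\<^sup>+x. f x * (\<integral>\<^sup>+y. h (x, y) \<partial>M) \<partial>lborel)"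
proof -
  interpret M: sigma_finite_measure M by fact
  have "(\<integral>\<^sup>+\<omega>. h \<omega> \<partial>(density lborel f \<Otimes>\<^sub>M M)) = (\<integral>\<^sup>+x. \<integral>\<^sup>+y. h (x, y) \<partial>M \<partial>density lborel f)"
    by (rule M.nn_integral_fst[symmetric]) measurable
  also have "\<dots> = (\<integral>\<^sup>+x. f x * (\<integral>\<^sup>+y. h (x, y) \<partial>M) \<partial>lborel)"
    by (rule nn_integral_density) measurable
  finally show ?thesis .
qed

lemma emeasure_distr_density_lborel_pair:
  fixes f g :: "real \<Rightarrow> real" and \<phi> :: "real \<times> real \<Rightarrow> real"
  assumes [measurable]: "f \<in> borel_measurable borel" "g \<in> borel_measurable borel"
    "\<phi> \<in> borel_measurable (borel \<Otimes>\<^sub>M borel)" "A \<in> sets borel"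
    and f: "\<And>x. 0 \<le> f x" and g: "\<And>y. 0 \<le> g y"
  shows "emeasure (distr (density lborel (\<lambda>x. ennreal (f x)) \<Otimes>\<^sub>M density lborel (\<lambda>y. ennreal (g y))) borel \<phi>) A
       = (\<integral>\<^sup>+x. \<integral>\<^sup>+y. ennreal (f x * g y * indicator A (\<phi> (x, y))) \<partial>lborel \<partial>lborel)"
proof -
  have "emeasure (distr (density lborel (\<lambda>x. ennreal (f x)) \<Otimes>\<^sub>M density lborel (\<lambda>y. ennreal (g y))) borel \<phi>) A
      = (\<integral>\<^sup>+\<omega>. indicator A (\<phi> \<omega>) \<partial>(density lborel (\<lambda>x. ennreal (f x)) \<Otimes>\<^sub>M density lborel (\<lambda>y. ennreal (g y))))"
    by (simp add: nn_integral_distr flip: nn_integral_indicator)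
  also have "\<dots> = (\<integral>\<^sup>+x. ennreal (f x) * (\<integral>\<^sup>+y. ennreal (g y) * indicator A (\<phi> (x, y)) \<partial>lborel) \<partial>lborel)"
    by (simp add: nn_integral_density_lborel_pair sigma_finite_density_lborel nn_integral_density)
  also have "\<dots> = (\<integral>\<^sup>+x. \<integral>\<^sup>+y. ennreal (f x * g y * indicator A (\<phi> (x, y))) \<partial>lborel \<partial>lborel)"
    using f g by (simp add: ennreal_mult' ennreal_indicator mult.assoc flip: nn_integral_cmult)
  finally show ?thesis .
qed

lemma emeasure_distr_density_lborel_triple:
  fixes f g h :: "real \<Rightarrow> real" and \<phi> :: "real \<times> real \<times> real \<Rightarrow> real"
  assumes [measurable]: "f \<in> borel_measurable borel" "g \<in> borel_measurable borel" "h \<in> borel_measurable borel"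
    "\<phi> \<in> borel_measurable (borel \<Otimes>\<^sub>M borel \<Otimes>\<^sub>M borel)" "A \<in> sets borel"
    and f: "\<And>x. 0 \<le> f x" and g: "\<And>y. 0 \<le> g y" and h: "\<And>z. 0 \<le> h z"
  shows "emeasure (distr (density lborel (\<lambda>x. ennreal (f x)) \<Otimes>\<^sub>M
                           (density lborel (\<lambda>y. ennreal (g y)) \<Otimes>\<^sub>M density lborel (\<lambda>z. ennreal (h z)))) borel \<phi>) A
       = (\<integral>\<^sup>+x. \<integral>\<^sup>+y. \<integral>\<^sup>+z. ennreal (f x * g y * h z * indicator A (\<phi> (x, y, z))) \<partial>lborel \<partial>lborel \<partial>lborel)"
proof -
  let ?G = "density lborel (\<lambda>y. ennreal (g y))" and ?H = "density lborel (\<lambda>z. ennreal (h z))"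
  have "emeasure (distr (density lborel (\<lambda>x. ennreal (f x)) \<Otimes>\<^sub>M (?G \<Otimes>\<^sub>M ?H)) borel \<phi>) A
      = (\<integral>\<^sup>+\<omega>. indicator A (\<phi> \<omega>) \<partial>(density lborel (\<lambda>x. ennreal (f x)) \<Otimes>\<^sub>M (?G \<Otimes>\<^sub>M ?H)))"
    by (simp add: nn_integral_distr flip: nn_integral_indicator)
  also have "\<dots> = (\<integral>\<^sup>+x. ennreal (f x) * (\<integral>\<^sup>+y. ennreal (g y) *
                    (\<integral>\<^sup>+z. ennreal (h z) * indicator A (\<phi> (x, y, z)) \<partial>lborel) \<partial>lborel) \<partial>lborel)"
    by (simp add: nn_integral_density_lborel_pair sigma_finite_density_lborel sigma_finite_pair_measure
                  nn_integral_density)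
  also have "\<dots> = (\<integral>\<^sup>+x. \<integral>\<^sup>+y. \<integral>\<^sup>+z. ennreal (f x * g y * h z * indicator A (\<phi> (x, y, z))) \<partial>lborel \<partial>lborel \<partial>lborel)"
    using f g h by (simp add: ennreal_mult' ennreal_indicator mult.assoc flip: nn_integral_cmult)
  finally show ?thesis .
qed

lemma borel_measurable_beta_density[measurable]: "beta_density p q \<in> borel_measurable borel"
  unfolding beta_density_def[abs_def] by measurable

lemma borel_measurable_beta_prime_density[measurable]: "beta_prime_density p q \<in> borel_measurable borel"
  unfolding beta_prime_density_def[abs_def] by measurable

lemma beta_density_nonneg: "p > 0 \<Longrightarrow> q > 0 \<Longrightarrow> 0 \<le> beta_density p q x"
  unfolding beta_density_def by auto

lemma beta_prime_density_nonneg: "p > 0 \<Longrightarrow> q > 0 \<Longrightarrow> 0 \<le> beta_prime_density p q x"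
  unfolding beta_prime_density_def by auto

lemma beta_density_eq_0: "\<not> (0 < x \<and> x < 1) \<Longrightarrow> beta_density p q x = 0"
  unfolding beta_density_def by auto

lemma beta_prime_density_eq_0: "x \<le> 0 \<Longrightarrow> beta_prime_density p q x = 0"
  unfolding beta_prime_density_def by auto

text \<open>The joint density of \<open>(X Y, X / Z, Z)\<close> at \<open>(u, v, z)\<close> for the independent variables of the
  right-hand side; \<open>1 / v\<close> is the Jacobian of \<open>(u, v) \<mapsto> (z v, u / (z v))\<close>.\<close>
definition beta_mixture_kernel :: "real \<Rightarrow> real \<Rightarrow> real \<Rightarrow> real \<Rightarrow> real \<Rightarrow> real" where
  "beta_mixture_kernel a b u v z =
     beta_prime_density (2 * a) (2 * b) (z * v) * beta_density a (1/2) (u / (z * v))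
       * beta_density b (1/2) z / v"

lemma borel_measurable_beta_mixture_kernel[measurable]:
  assumes [measurable]: "f \<in> borel_measurable M" "g \<in> borel_measurable M" "h \<in> borel_measurable M"
  shows "(\<lambda>\<omega>. beta_mixture_kernel a b (f \<omega>) (g \<omega>) (h \<omega>)) \<in> borel_measurable M"
  unfolding beta_mixture_kernel_def by measurable

lemma beta_mixture_powr_eq:
  fixes a b u v z :: real
  assumes ab: "a + b = 1/2" and u: "0 < u" and v: "0 < v" and z: "u / v < z" "z < 1"
  shows "(z * v) powr (2 * a - 1) * (u / (z * v)) powr (a - 1) * (1 - u / (z * v)) powr -(1/2)
           * z powr (b - 1) * (1 - z) powr -(1/2) / v
       = (u * v) powr (a - 1) / sqrt ((1 - z) * (z - u / v))"
    (is "?P = ?Q")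
proof -
  have z0: "0 < z"
    using divide_pos_pos[OF u v] z(1) by linarith
  have w: "1 - u / (z * v) = (z - u / v) / z"
    using z0 v by (simp add: field_simps)
  have pos: "z - u / v > 0" "1 - z > 0"
    using z by auto
  have "ln ?P = (2 * a - 1) * (ln z + ln v) + (a - 1) * (ln u - ln z - ln v)
                - (ln (z - u / v) - ln z) / 2 + (b - 1) * ln z - ln (1 - z) / 2 - ln v"
    unfolding w using pos z0 u v by (simp add: ln_mult ln_div)
  also have "\<dots> = (a - 1) * (ln u + ln v) - (ln (1 - z) + ln (z - u / v)) / 2"
  proof -
    have b_eq: "b = 1/2 - a" using ab by simp
    show ?thesis by (simp add: b_eq algebra_simps add_divide_distrib diff_divide_distrib)
  qed
  also have "\<dots> = ln ?Q"
    using pos u v by (simp add: ln_mult ln_div ln_sqrt)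
  finally show ?thesis
    unfolding w using pos z0 u v by simp
qed

lemma beta_mixture_kernel_eq:
  fixes a b u v z :: real
  assumes a: "a > 0" and b: "b > 0" and ab: "a + b = 1/2"
    and u: "0 < u" and z: "u / v < z" "z < 1" and uv: "u < v"
  shows "beta_mixture_kernel a b u v z
       = 2 / (Gamma a * Gamma b)\<^sup>2 * (u * v) powr (a - 1) / ((1 + v * z) * sqrt ((1 - z) * (z - u / v)))"
proof -
  have v: "v > 0" using u uv by linarith
  have zv: "u < z * v" using z v by (simp add: divide_less_eq)
  have z0: "0 < z" using divide_pos_pos[OF u v] z(1) by linarith
  have y: "0 < u / (z * v)" "u / (z * v) < 1"
    using zv u v z0 by (auto simp: divide_less_eq)
  have Gamma_pos: "Gamma a > 0" "Gamma b > 0" "Gamma (2 * a) > 0" "Gamma (2 * b) > 0"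
    using a b by auto
  have "beta_mixture_kernel a b u v z
      = Gamma (a + 1/2) * Gamma (b + 1/2) / (Gamma (2 * a) * Gamma (2 * b) * Gamma a * Gamma b * (Gamma (1/2))\<^sup>2)
        * ((z * v) powr (2 * a - 1) * (u / (z * v)) powr (a - 1) * (1 - u / (z * v)) powr -(1/2)
           * z powr (b - 1) * (1 - z) powr -(1/2) / v) / (1 + v * z)"
    unfolding beta_mixture_kernel_def beta_prime_density_def beta_density_def
    using y z0 z v u Gamma_pos ab by (simp add: field_simps power2_eq_square)
  also have "Gamma (a + 1/2) * Gamma (b + 1/2) / (Gamma (2 * a) * Gamma (2 * b) * Gamma a * Gamma b * (Gamma (1/2))\<^sup>2)
      = 2 / (Gamma a * Gamma b)\<^sup>2"
    using Gamma_duplication_product[OF a b ab] Gamma_pos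
    by (simp add: Gamma_one_half_real field_simps power2_eq_square)
  finally show ?thesis
    unfolding beta_mixture_powr_eq[OF ab u v z] by simp
qed

lemma beta_mixture_kernel_nonneg:
  assumes "a > 0" "b > 0"
  shows "0 \<le> beta_mixture_kernel a b u v z"
proof (cases "v > 0")
  case True
  then show ?thesis
    unfolding beta_mixture_kernel_def using assms
    by (intro divide_nonneg_pos mult_nonneg_nonneg beta_density_nonneg beta_prime_density_nonneg) auto
next
  case False
  then have "beta_prime_density (2 * a) (2 * b) (z * v) = 0 \<or> beta_density b (1/2) z = 0"
    by (cases "0 < z") (auto intro: beta_prime_density_eq_0 beta_density_eq_0 simp: mult_nonneg_nonpos)
  then show ?thesis
    unfolding beta_mixture_kernel_def by auto
qed

lemma beta_mixture_kernel_eq_0: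
  assumes "\<not> (0 < u \<and> u < v \<and> u / v \<le> z \<and> z \<le> 1)"
  shows "beta_mixture_kernel a b u v z = 0"
proof (rule ccontr)
  assume "beta_mixture_kernel a b u v z \<noteq> 0"
  then have "0 < z * v" "0 < u / (z * v)" "u / (z * v) < 1" "0 < z" "z < 1"
    unfolding beta_mixture_kernel_def
    by (auto intro: beta_prime_density_eq_0 beta_density_eq_0 simp: not_less)
  then have "0 < u" "u < z * v" "0 < v"
    by (auto simp: zero_less_mult_iff zero_less_divide_iff divide_less_eq mult_less_0_iff)
  moreover have "z * v < v"
    using \<open>0 < v\<close> \<open>z < 1\<close> by simp
  ultimately show False
    using assms \<open>z < 1\<close> by (auto simp: pos_divide_le_eq)
qed

lemma has_integral_beta_mixture_kernel:
  fixes a b u v :: real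
  assumes a: "a > 0" and b: "b > 0" and ab: "a + b = 1/2" and u: "0 < u" and uv: "u < v"
  shows "(beta_mixture_kernel a b u v has_integral 2 * beta_prime_density a b u * beta_prime_density a b v)
           {u / v..1}"
proof -
  have v: "v > 0" using u uv by linarith
  define K where "K = 2 / (Gamma a * Gamma b)\<^sup>2 * (u * v) powr (a - 1)"
  have "((\<lambda>z. 1 / ((1 + v * z) * sqrt ((1 - z) * (z - u / v)))) has_integral pi / sqrt ((1 + u) * (1 + v)))
          {u / v..1}"
    using has_integral_arcsin_substitution[of "u / v" v] u v uv by simp
  then have "((\<lambda>z. K * (1 / ((1 + v * z) * sqrt ((1 - z) * (z - u / v)))))
          has_integral K * (pi / sqrt ((1 + u) * (1 + v)))) {u / v..1}"
    by (rule has_integral_mult_right)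
  then have "(beta_mixture_kernel a b u v has_integral K * (pi / sqrt ((1 + u) * (1 + v)))) {u / v..1}"
  proof (rule has_integral_spike_finite[rotated 2])
    show "finite {u / v, 1}" by simp
    fix z assume "z \<in> {u / v..1} - {u / v, 1}"
    then show "beta_mixture_kernel a b u v z = K * (1 / ((1 + v * z) * sqrt ((1 - z) * (z - u / v))))"
      using beta_mixture_kernel_eq[OF a b ab u _ _ uv] by (simp add: K_def)
  qed
  moreover have "2 * beta_prime_density a b u * beta_prime_density a b v
      = 2 * (Gamma (1/2) / (Gamma a * Gamma b))\<^sup>2 * (u powr (a - 1) / sqrt (1 + u)) * (v powr (a - 1) / sqrt (1 + v))"
    using u v by (simp add: ab beta_prime_density_def powr_half_sqrt power2_eq_square mult_ac)
  moreover have "\<dots> = K * (pi / sqrt ((1 + u) * (1 + v)))"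
    using u v by (simp add: K_def Gamma_one_half_real powr_mult real_sqrt_mult power_divide mult_ac)
  ultimately show ?thesis by simp
qed

definition beta_prime_order_density :: "real \<Rightarrow> real \<Rightarrow> real \<Rightarrow> real \<Rightarrow> real" where
  "beta_prime_order_density a b u v =
     (if 0 < u \<and> u < v then 2 * beta_prime_density a b u * beta_prime_density a b v else 0)"

lemma nn_integral_beta_mixture_kernel:
  fixes a b u v :: real
  assumes a: "a > 0" and b: "b > 0" and ab: "a + b = 1/2"
  shows "(\<integral>\<^sup>+z. ennreal (beta_mixture_kernel a b u v z) \<partial>lborel)
       = ennreal (beta_prime_order_density a b u v)"
proof (cases "0 < u \<and> u < v")
  case True
  have "beta_mixture_kernel a b u v = (\<lambda>z. if z \<in> {u / v..1} then beta_mixture_kernel a b u v z else 0)"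
    using beta_mixture_kernel_eq_0[of u v] by auto
  then have "(beta_mixture_kernel a b u v has_integral 2 * beta_prime_density a b u * beta_prime_density a b v) UNIV"
    using has_integral_beta_mixture_kernel[OF a b ab] True by (metis has_integral_restrict_UNIV)
  then show ?thesis
    using True
    by (simp add: nn_integral_has_integral_lborel beta_mixture_kernel_nonneg a b beta_prime_order_density_def)
next
  case False
  then have "beta_mixture_kernel a b u v z = 0" for z
    by (intro beta_mixture_kernel_eq_0) auto
  then show ?thesis
    using False by (auto simp: beta_prime_order_density_def)
qed

lemma nn_integral_beta_mixture_substitution:
  assumes [measurable]: "A \<in> sets borel"
  shows "(\<integral>\<^sup>+x. \<integral>\<^sup>+y. \<integral>\<^sup>+z. ennreal (beta_prime_density (2 * a) (2 * b) x * beta_density a (1/2) y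
             * beta_density b (1/2) z * indicator A (x * (y + 1 / z))) \<partial>lborel \<partial>lborel \<partial>lborel)
       = (\<integral>\<^sup>+u. \<integral>\<^sup>+v. \<integral>\<^sup>+z. ennreal (beta_mixture_kernel a b u v z * indicator A (u + v))
             \<partial>lborel \<partial>lborel \<partial>lborel)"
  (is "?lhs = _")
proof -
  let ?q = "beta_prime_density (2 * a) (2 * b)" and ?r = "beta_density a (1/2)" and ?s = "beta_density b (1/2)"
  have "?lhs = (\<integral>\<^sup>+z. \<integral>\<^sup>+x. \<integral>\<^sup>+y. ennreal (?q x * ?r y * ?s z * indicator A (x * (y + 1 / z)))
                 \<partial>lborel \<partial>lborel \<partial>lborel)"
    by (rule nn_integral_lborel_rotate) measurable
  also have "\<dots> = (\<integral>\<^sup>+z. \<integral>\<^sup>+x. \<integral>\<^sup>+u. ennreal (?q x * (?r (u / x) / x) * ?s z * indicator A (u + x / z))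
                     \<partial>lborel \<partial>lborel \<partial>lborel)"
  proof (rule nn_integral_cong, rule nn_integral_cong)
    fix z x :: real
    show "(\<integral>\<^sup>+y. ennreal (?q x * ?r y * ?s z * indicator A (x * (y + 1 / z))) \<partial>lborel)
        = (\<integral>\<^sup>+u. ennreal (?q x * (?r (u / x) / x) * ?s z * indicator A (u + x / z)) \<partial>lborel)"
    proof (cases "x > 0")
      case True
      have "x * (1 / x * u + 1 / z) = u + x / z" for u
        using True by (simp add: distrib_left)
      then show ?thesis
        using True by (subst nn_integral_lborel_scale[where c = "1 / x"]) (simp_all add: mult_ac)
    next
      case False
      then show ?thesis by (simp add: beta_prime_density_eq_0)
    qed
  qed
  also have "\<dots> = (\<integral>\<^sup>+z. \<integral>\<^sup>+u. \<integral>\<^sup>+x. ennreal (?q x * (?r (u / x) / x) * ?s z * indicator A (u + x / z))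
                     \<partial>lborel \<partial>lborel \<partial>lborel)"
    by (intro nn_integral_cong lborel_pair.Fubini'[symmetric]) measurable
  also have "\<dots> = (\<integral>\<^sup>+z. \<integral>\<^sup>+u. \<integral>\<^sup>+v. ennreal (beta_mixture_kernel a b u v z * indicator A (u + v))
                     \<partial>lborel \<partial>lborel \<partial>lborel)"
  proof (rule nn_integral_cong, rule nn_integral_cong)
    fix z u :: real
    show "(\<integral>\<^sup>+x. ennreal (?q x * (?r (u / x) / x) * ?s z * indicator A (u + x / z)) \<partial>lborel)
        = (\<integral>\<^sup>+v. ennreal (beta_mixture_kernel a b u v z * indicator A (u + v)) \<partial>lborel)"
    proof (cases "z > 0")
      case True
      then show ?thesis
        by (subst nn_integral_lborel_scale[where c = z]) (simp_all add: beta_mixture_kernel_def field_simps)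
    next
      case False
      then show ?thesis by (simp add: beta_mixture_kernel_def beta_density_eq_0)
    qed
  qed
  also have "\<dots> = (\<integral>\<^sup>+u. \<integral>\<^sup>+v. \<integral>\<^sup>+z. ennreal (beta_mixture_kernel a b u v z * indicator A (u + v))
                     \<partial>lborel \<partial>lborel \<partial>lborel)"
    by (rule nn_integral_lborel_rotate[symmetric]) measurable
  finally show ?thesis .
qed

lemma emeasure_distr_sum_beta_prime:
  assumes "a > 0" "b > 0" and [measurable]: "A \<in> sets borel"
  shows "emeasure (distr (beta_prime_measure a b \<Otimes>\<^sub>M beta_prime_measure a b) borel (\<lambda>(x, y). x + y)) A
       = (\<integral>\<^sup>+u. \<integral>\<^sup>+v. ennreal (beta_prime_order_density a b u v) * indicator A (u + v) \<partial>lborel \<partial>lborel)"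
proof -
  have "emeasure (distr (beta_prime_measure a b \<Otimes>\<^sub>M beta_prime_measure a b) borel (\<lambda>(x, y). x + y)) A
      = (\<integral>\<^sup>+u. \<integral>\<^sup>+v. ennreal (beta_prime_density a b u * beta_prime_density a b v * indicator A (u + v))
           \<partial>lborel \<partial>lborel)"
    unfolding beta_prime_measure_def using assms
    by (subst emeasure_distr_density_lborel_pair) (auto simp: beta_prime_density_nonneg split_beta')
  also have "\<dots> = (\<integral>\<^sup>+u. \<integral>\<^sup>+v. (if u < v then 2 * ennreal (beta_prime_density a b u * beta_prime_density a b v
                     * indicator A (u + v)) else 0) \<partial>lborel \<partial>lborel)"
    by (rule nn_integral_lborel_symmetric) (auto simp: mult.commute add.commute)
  also have "\<dots> = (\<integral>\<^sup>+u. \<integral>\<^sup>+v. ennreal (beta_prime_order_density a b u v) * indicator A (u + v) \<partial>lborel \<partial>lborel)"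
    using assms by (intro nn_integral_cong)
      (auto simp: beta_prime_order_density_def beta_prime_density_eq_0 beta_prime_density_nonneg
                  ennreal_mult ennreal_indicator mult.assoc)
  finally show ?thesis .
qed

lemma emeasure_distr_beta_prime_times_beta_mixture:
  assumes "a > 0" "b > 0" "a + b = 1/2" and [measurable]: "A \<in> sets borel"
  shows "emeasure (distr (beta_prime_measure (2 * a) (2 * b) \<Otimes>\<^sub>M (beta_measure a (1/2) \<Otimes>\<^sub>M beta_measure b (1/2)))
                         borel (\<lambda>(x, y, z). x * (y + 1 / z))) A
       = (\<integral>\<^sup>+u. \<integral>\<^sup>+v. ennreal (beta_prime_order_density a b u v) * indicator A (u + v) \<partial>lborel \<partial>lborel)"
proof -
  have "emeasure (distr (beta_prime_measure (2 * a) (2 * b) \<Otimes>\<^sub>M (beta_measure a (1/2) \<Otimes>\<^sub>M beta_measure b (1/2)))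
                         borel (\<lambda>(x, y, z). x * (y + 1 / z))) A
      = (\<integral>\<^sup>+x. \<integral>\<^sup>+y. \<integral>\<^sup>+z. ennreal (beta_prime_density (2 * a) (2 * b) x * beta_density a (1/2) y
           * beta_density b (1/2) z * indicator A (x * (y + 1 / z))) \<partial>lborel \<partial>lborel \<partial>lborel)"
    unfolding beta_prime_measure_def beta_measure_def using assms
    by (subst emeasure_distr_density_lborel_triple)
       (auto simp: beta_prime_density_nonneg beta_density_nonneg split_beta')
  also have "\<dots> = (\<integral>\<^sup>+u. \<integral>\<^sup>+v. \<integral>\<^sup>+z. ennreal (beta_mixture_kernel a b u v z * indicator A (u + v))
           \<partial>lborel \<partial>lborel \<partial>lborel)"
    by (rule nn_integral_beta_mixture_substitution) measurable
  also have "\<dots> = (\<integral>\<^sup>+u. \<integral>\<^sup>+v. (\<integral>\<^sup>+z. ennreal (beta_mixture_kernel a b u v z) \<partial>lborel) * indicator A (u + v)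
           \<partial>lborel \<partial>lborel)"
    by (simp add: ennreal_mult'' ennreal_indicator nn_integral_multc)
  also have "\<dots> = (\<integral>\<^sup>+u. \<integral>\<^sup>+v. ennreal (beta_prime_order_density a b u v) * indicator A (u + v) \<partial>lborel \<partial>lborel)"
    using assms by (simp add: nn_integral_beta_mixture_kernel)
  finally show ?thesis .
qed

theorem proposition6:
  fixes a b :: real
  assumes "a > 0" and "b > 0" and "a + b = 1 / 2"
  shows "distr (beta_prime_measure a b \<Otimes>\<^sub>M beta_prime_measure a b) borel
            (\<lambda>(x, y). x + y)
       = distr (beta_prime_measure (2 * a) (2 * b) \<Otimes>\<^sub>M
                  (beta_measure a (1 / 2) \<Otimes>\<^sub>M beta_measure b (1 / 2))) borel
            (\<lambda>(x, y, z). x * (y + 1 / z))"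
proof (rule measure_eqI)
  fix A
  assume "A \<in> sets (distr (beta_prime_measure a b \<Otimes>\<^sub>M beta_prime_measure a b) borel (\<lambda>(x, y). x + y))"
  then have "A \<in> sets borel" by simp
  then show "emeasure (distr (beta_prime_measure a b \<Otimes>\<^sub>M beta_prime_measure a b) borel (\<lambda>(x, y). x + y)) A
      = emeasure (distr (beta_prime_measure (2 * a) (2 * b) \<Otimes>\<^sub>M
                  (beta_measure a (1 / 2) \<Otimes>\<^sub>M beta_measure b (1 / 2))) borel (\<lambda>(x, y, z). x * (y + 1 / z))) A"
    using assms by (simp add: emeasure_distr_sum_beta_prime emeasure_distr_beta_prime_times_beta_mixture)
qed simp

end
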